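(* Let $T$ be a horizon with $T>25\log T$. Consider the two-armed instance in which arm 1 is Bernoulli with mean $\mu_1=(2e)^{-T}$ and arm 2 is Bernoulli with mean $\mu_2=1$. Then the UCB algorithm run for $T$ rounds on this instance has Nash regret $$\textsc{NR}_T\ge 1-\frac1T.$$
   Context: Nash regret: $\textsc{NR}_T:=\mu^*-\big(\prod_{t=1}^T\mathbb{E}[\mu_{I_t}]\big)^{1/T}$, where $I_t$ is the arm pulled in round $t$ and $\mu^*=\max_i\mu_i$. $\log$ is the natural logarithm. UCB algorithm: in each round $t$ it pulls an arm maximizing $\mathrm{UCB}_{i,t}:=\widehat\mu_i+\sqrt{\frac{2\log T}{n_{i,t}}}$, where $n_{i,t}$ is the number of times arm $i$ was pulled before round $t$ and $\widehat\mu_i$ its empirical mean (an arm not yet pulled has index $+\infty$); ties are broken by an arbitrary but fixed deterministic rule. *)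

theory Defs
  imports "HOL-Probability.Probability"
begin

text \<open>A history is the list of (arm pulled, observed Bernoulli reward) of the rounds so far.\<close>
type_synonym history = "(nat \<times> bool) list"

definition pulls :: "history \<Rightarrow> nat \<Rightarrow> nat" where
  "pulls h i = length (filter (\<lambda>p. fst p = i) h)"

definition emp_mean :: "history \<Rightarrow> nat \<Rightarrow> real" where
  "emp_mean h i = (\<Sum>p\<leftarrow>filter (\<lambda>p. fst p = i) h. if snd p then 1 else 0) / real (pulls h i)"

definition ucb_index :: "nat \<Rightarrow> history \<Rightarrow> nat \<Rightarrow> ereal" where
  "ucb_index T h i = (if pulls h i = 0 then \<infinity>
      else ereal (emp_mean h i + sqrt (2 * ln (real T) / real (pulls h i))))"

text \<open>A deterministic UCB selection rule on arm set A: always pulls an arm of maximal index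
  (ties broken by an arbitrary fixed deterministic rule).\<close>
definition is_ucb_rule :: "nat set \<Rightarrow> nat \<Rightarrow> (history \<Rightarrow> nat) \<Rightarrow> bool" where
  "is_ucb_rule A T pick \<longleftrightarrow>
     (\<forall>h. pick h \<in> A \<and> (\<forall>j\<in>A. ucb_index T h j \<le> ucb_index T h (pick h)))"

fun hist :: "(history \<Rightarrow> nat) \<Rightarrow> (nat \<Rightarrow> real) \<Rightarrow> nat \<Rightarrow> history pmf" where
  "hist pick \<mu> 0 = return_pmf []"
| "hist pick \<mu> (Suc t) = bind_pmf (hist pick \<mu> t)
     (\<lambda>h. map_pmf (\<lambda>r. h @ [(pick h, r)]) (bernoulli_pmf (\<mu> (pick h))))"

text \<open>E[mu_{I_{t+1}}]: expected mean of the arm pulled in round t+1.\<close>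
definition exp_mean_pulled :: "(history \<Rightarrow> nat) \<Rightarrow> (nat \<Rightarrow> real) \<Rightarrow> nat \<Rightarrow> real" where
  "exp_mean_pulled pick \<mu> t = measure_pmf.expectation (hist pick \<mu> t) (\<lambda>h. \<mu> (pick h))"

definition nash_regret :: "nat set \<Rightarrow> (history \<Rightarrow> nat) \<Rightarrow> (nat \<Rightarrow> real) \<Rightarrow> nat \<Rightarrow> real" where
  "nash_regret A pick \<mu> T = Max (\<mu> ` A) - root T (\<Prod>t<T. exp_mean_pulled pick \<mu> t)"

end

theory Submission
  imports Defs
begin

text \<open>Consider the run of UCB in which arm 1 always pays 0 and arm 2 always pays 1. Each round
  deviates from it with probability at most \<open>\<epsilon> = (2e)\<^sup>-\<^sup>T\<close>, so it has probability at least
  \<open>1 - t\<epsilon>\<close> after \<open>t\<close> rounds, and in every round where this run pulls arm 1 the expected mean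
  of the pulled arm is at most \<open>T\<epsilon>\<close>. Along the run the index of arm 1 is
  \<open>sqrt (2 ln T / k)\<close>, so it keeps being pulled until \<open>k \<ge> ln T\<close> unless arm 2 has already been
  pulled \<open>\<ge> 12 ln T\<close> times; as \<open>T > 25 ln T\<close>, arm 1 is pulled at least \<open>ln T\<close> times. Hence
  the product of the expected means is at most \<open>(T\<epsilon>)\<^bsup>ln T\<^esup> \<le> T\<^sup>-\<^sup>T\<close>, and its \<open>T\<close>-th root is at
  most \<open>1/T\<close>.\<close>

lemma pmf_mult_le_expectation:
  fixes M :: "'a pmf" and f :: "'a \<Rightarrow> real"
  assumes "\<And>z. 0 \<le> f z" "\<And>z. f z \<le> 1"
  shows "pmf M y * f y \<le> measure_pmf.expectation M f"
proof -
  have "pmf M y * f y = measure_pmf.expectation M (\<lambda>z. indicator {y} z * f y)"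
    by (simp add: pmf.rep_eq)
  also have "\<dots> \<le> measure_pmf.expectation M f"
    using assms
    by (intro integral_mono measure_pmf.integrable_const_bound[where B=1])
       (auto simp: indicator_def)
  finally show ?thesis .
qed

lemma expectation_le_one_minus_pmf_mult:
  fixes M :: "'a pmf" and f :: "'a \<Rightarrow> real"
  assumes "\<And>z. 0 \<le> f z" "\<And>z. f z \<le> 1"
  shows "measure_pmf.expectation M f \<le> 1 - pmf M y * (1 - f y)"
proof -
  have "integrable (measure_pmf M) f"
    using assms by (intro measure_pmf.integrable_const_bound[where B=1]) auto
  moreover have "pmf M y * (1 - f y) \<le> measure_pmf.expectation M (\<lambda>z. 1 - f z)"
    using assms by (intro pmf_mult_le_expectation) auto
  ultimately show ?thesis
    by (simp add: Bochner_Integration.integral_diff)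
qed

lemma exp_mean_pulled_nonneg:
  assumes "\<And>i. 0 \<le> \<mu> i"
  shows "0 \<le> exp_mean_pulled pick \<mu> t"
  unfolding exp_mean_pulled_def using assms by (intro Bochner_Integration.integral_nonneg) auto

lemma exp_mean_pulled_le_1:
  assumes "\<And>i. 0 \<le> \<mu> i" "\<And>i. \<mu> i \<le> 1"
  shows "exp_mean_pulled pick \<mu> t \<le> 1"
  unfolding exp_mean_pulled_def using assms
  by (intro measure_pmf.integral_le_const measure_pmf.integrable_const_bound[where B=1]) auto

definition hard_instance :: "real \<Rightarrow> nat \<Rightarrow> real" where
  "hard_instance e i = (if i = 1 then e else 1)"

lemma hard_instance_bounds:
  assumes "0 \<le> e" "e \<le> 1"
  shows "0 \<le> hard_instance e i" "hard_instance e i \<le> 1"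
  using assms by (auto simp: hard_instance_def)

fun typical_history :: "(history \<Rightarrow> nat) \<Rightarrow> nat \<Rightarrow> history" where
  "typical_history pick 0 = []"
| "typical_history pick (Suc t) =
     typical_history pick t @ [(pick (typical_history pick t), pick (typical_history pick t) \<noteq> 1)]"

declare typical_history.simps(2) [simp del]

lemma typical_history_rewards:
  "(i, r) \<in> set (typical_history pick t) \<Longrightarrow> r = (i \<noteq> 1)"
  by (induction t) (auto simp: typical_history.simps)

lemma pulls_typical_history_Suc [simp]:
  "pulls (typical_history pick (Suc t)) i =
     pulls (typical_history pick t) i + (if pick (typical_history pick t) = i then 1 else 0)"
  by (simp add: pulls_def typical_history.simps)

lemma pulls_typical_history_sum:
  assumes "\<And>h. pick h \<in> {1, 2}"
  shows "pulls (typical_history pick t) 1 + pulls (typical_history pick t) 2 = t"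
proof (induction t)
  case (Suc t)
  then show ?case
    using assms[of "typical_history pick t"] by auto
qed (simp add: pulls_def)

lemma pmf_typical_history_ge:
  assumes "0 \<le> e" "e \<le> 1"
  shows "1 - real t * e \<le> pmf (hist pick (hard_instance e) t) (typical_history pick t)"
proof (induction t)
  case (Suc t)
  define h where "h = typical_history pick t"
  define step where "step = (\<lambda>h. map_pmf (\<lambda>r. h @ [(pick h, r)])
                                  (bernoulli_pmf (hard_instance e (pick h))))"
  have "pmf (step h) (typical_history pick (Suc t))
          = pmf (bernoulli_pmf (hard_instance e (pick h))) (pick h \<noteq> 1)"
    unfolding step_def h_def typical_history.simps by (rule pmf_map_inj') (auto intro: injI)
  also have "\<dots> \<ge> 1 - e"
    using assms by (auto simp: hard_instance_def)
  finally have step_ge: "1 - e \<le> pmf (step h) (typical_history pick (Suc t))" .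
  have "1 - real (Suc t) * e \<le> (1 - real t * e) * (1 - e)"
    using assms by (simp add: algebra_simps)
  also have "\<dots> \<le> pmf (hist pick (hard_instance e) t) h * pmf (step h) (typical_history pick (Suc t))"
    using Suc.IH assms step_ge
    by (intro mult_mono) (auto simp: h_def)
  also have "\<dots> \<le> pmf (hist pick (hard_instance e) (Suc t)) (typical_history pick (Suc t))"
    unfolding hist.simps step_def[symmetric] pmf_bind
    by (rule pmf_mult_le_expectation) (auto simp: pmf_le_1)
  finally show ?case .
qed simp

lemma exp_mean_pulled_le_if_typical_pulls_arm1:
  assumes "0 \<le> e" "e \<le> 1" and "pick (typical_history pick t) = 1"
  shows "exp_mean_pulled pick (hard_instance e) t \<le> (real t + 1) * e"
proof -
  have "exp_mean_pulled pick (hard_instance e) t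
          \<le> 1 - pmf (hist pick (hard_instance e) t) (typical_history pick t)
                * (1 - hard_instance e (pick (typical_history pick t)))"
    unfolding exp_mean_pulled_def
    by (rule expectation_le_one_minus_pmf_mult) (use hard_instance_bounds[OF assms(1,2)] in auto)
  also have "\<dots> = 1 - pmf (hist pick (hard_instance e) t) (typical_history pick t) * (1 - e)"
    using assms(3) by (simp add: hard_instance_def)
  also have "\<dots> \<le> 1 - (1 - real t * e) * (1 - e)"
    using pmf_typical_history_ge[OF assms(1,2)] assms(2) by (simp add: mult_right_mono)
  also have "\<dots> \<le> (real t + 1) * e"
    using assms(1,2) by (simp add: algebra_simps)
  finally show ?thesis .
qed

lemma prod_exp_mean_pulled_le:
  assumes "0 \<le> e" "e \<le> 1" and "n \<le> N"
  shows "(\<Prod>t<n. exp_mean_pulled pick (hard_instance e) t)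
           \<le> (real N * e) ^ pulls (typical_history pick n) 1"
  using assms(3)
proof (induction n)
  case (Suc n)
  define P where "P = (\<Prod>t<n. exp_mean_pulled pick (hard_instance e) t)"
  define k where "k = pulls (typical_history pick n) 1"
  define x where "x = exp_mean_pulled pick (hard_instance e) n"
  have IH: "P \<le> (real N * e) ^ k"
    using Suc by (simp add: P_def k_def)
  have P_nonneg: "0 \<le> P"
    unfolding P_def using hard_instance_bounds[OF assms(1,2)]
    by (intro prod_nonneg exp_mean_pulled_nonneg) auto
  have x_bounds: "0 \<le> x" "x \<le> 1"
    unfolding x_def using hard_instance_bounds[OF assms(1,2)]
    by (auto intro: exp_mean_pulled_nonneg exp_mean_pulled_le_1)
  show ?case
  proof (cases "pick (typical_history pick n) = 1")
    case True
    have "x \<le> (real n + 1) * e"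
      unfolding x_def using assms(1,2) True by (rule exp_mean_pulled_le_if_typical_pulls_arm1)
    also have "\<dots> \<le> real N * e"
      using Suc.prems assms(1) by (intro mult_right_mono) auto
    finally have "x \<le> real N * e" .
    then have "P * x \<le> (real N * e) ^ k * (real N * e)"
      using IH P_nonneg x_bounds by (intro mult_mono) auto
    then show ?thesis
      using True by (simp add: P_def x_def k_def mult.commute)
  next
    case False
    have "P * x \<le> P"
      using P_nonneg x_bounds by (simp add: mult_left_le)
    then show ?thesis
      using False IH by (simp add: P_def x_def k_def)
  qed
qed (simp add: pulls_def)

lemma emp_mean_arm1_typical:
  assumes "\<forall>(i, r)\<in>set h. r = (i \<noteq> 1)"
  shows "emp_mean h 1 = 0"
proof -
  have "(\<Sum>p\<leftarrow>filter (\<lambda>p. fst p = 1) h. if snd p then 1 else (0::real)) = 0"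
    using assms by (induction h) auto
  then show ?thesis by (simp add: emp_mean_def)
qed

lemma emp_mean_arm2_typical:
  assumes "\<forall>(i, r)\<in>set h. r = (i \<noteq> 1)" and "pulls h 2 \<noteq> 0"
  shows "emp_mean h 2 = 1"
proof -
  have "(\<Sum>p\<leftarrow>filter (\<lambda>p. fst p = 2) h. if snd p then 1 else (0::real)) = real (pulls h 2)"
    using assms(1) by (induction h) (auto simp: pulls_def)
  then show ?thesis using assms(2) by (simp add: emp_mean_def)
qed

text \<open>The numerical core of the UCB comparison \<open>sqrt (2L/k) \<le> 1 + sqrt (2L/n)\<close>: when
  \<open>k < L\<close>, the left side exceeds \<open>sqrt 2 > 1.41\<close>, which forces \<open>2L/n > 0.41\<^sup>2\<close>.\<close>
lemma ucb_comparison_bound: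
  fixes k n L :: real
  assumes "1 \<le> k" "1 \<le> n" "k < L" "sqrt (2 * L / k) \<le> 1 + sqrt (2 * L / n)"
  shows "n \<le> 12 * L"
proof -
  have "2 < 2 * L / k" using assms by (simp add: field_simps)
  then have "sqrt 2 < sqrt (2 * L / k)" by simp
  moreover have "141/100 \<le> sqrt (2::real)"
    by (rule real_le_rsqrt) (simp add: power2_eq_square)
  ultimately have "41/100 < sqrt (2 * L / n)" using assms(4) by linarith
  then have "(41/100)\<^sup>2 < (sqrt (2 * L / n))\<^sup>2"
    by (intro power_strict_mono) auto
  also have "\<dots> = 2 * L / n" using assms by simp
  finally have "(41/100)\<^sup>2 * n < 2 * L" using assms by (simp add: field_simps)
  then show ?thesis using assms by (simp add: power2_eq_square)
qed

lemma ucb_pulls_arm2_le: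
  assumes ucb: "is_ucb_rule {1, 2} T pick"
    and typical: "\<forall>(i, r)\<in>set h. r = (i \<noteq> 1)"
    and pick2: "pick h = 2"
    and few: "real (pulls h 1) < ln (real T)"
  shows "real (pulls h 2) \<le> 12 * ln (real T)"
proof (cases "pulls h 2 = 0")
  case False
  have le: "ucb_index T h 1 \<le> ucb_index T h 2"
    using ucb pick2 unfolding is_ucb_rule_def by (metis insertI1)
  then have "pulls h 1 \<noteq> 0"
    using False by (auto simp: ucb_index_def split: if_splits)
  moreover have "sqrt (2 * ln (real T) / real (pulls h 1))
                   \<le> 1 + sqrt (2 * ln (real T) / real (pulls h 2))"
    using le False \<open>pulls h 1 \<noteq> 0\<close>
    unfolding ucb_index_def emp_mean_arm1_typical[OF typical] emp_mean_arm2_typical[OF typical False]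
    by simp
  ultimately show ?thesis
    using ucb_comparison_bound[of "real (pulls h 1)" "real (pulls h 2)" "ln (real T)"] False few
    by simp
qed (use few in simp)

lemma typical_pulls_arm2_le:
  assumes "is_ucb_rule {1, 2} T pick"
  shows "real (pulls (typical_history pick t) 1) < ln (real T)
           \<Longrightarrow> real (pulls (typical_history pick t) 2) \<le> 1 + 12 * ln (real T)"
proof (induction t)
  case (Suc t)
  define h where "h = typical_history pick t"
  have "pick h \<in> {1, 2}"
    using assms unfolding is_ucb_rule_def by blast
  then consider "pick h = 1" | "pick h = 2" by blast
  then show ?case
  proof cases
    case 1
    then show ?thesis
      using Suc by (simp add: h_def)
  next
    case 2
    then have "real (pulls h 2) \<le> 12 * ln (real T)"
      using Suc.prems typical_history_rewards
      by (intro ucb_pulls_arm2_le[OF assms]) (auto simp: h_def)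
    then show ?thesis
      using 2 by (simp add: h_def)
  qed
qed (simp add: pulls_def)

lemma ln_le_typical_pulls_arm1:
  assumes ucb: "is_ucb_rule {1, 2} T pick" and T: "13 * ln (real T) + 1 \<le> real T"
  shows "ln (real T) \<le> real (pulls (typical_history pick T) 1)"
proof (rule ccontr)
  assume "\<not> ?thesis"
  then have "real (pulls (typical_history pick T) 1) < ln (real T)" by simp
  moreover from this have "real (pulls (typical_history pick T) 2) \<le> 1 + 12 * ln (real T)"
    by (rule typical_pulls_arm2_le[OF ucb])
  moreover have "real (pulls (typical_history pick T) 1) + real (pulls (typical_history pick T) 2)
                   = real T"
    using ucb pulls_typical_history_sum[of pick T] unfolding is_ucb_rule_def
    by (metis of_nat_add)
  ultimately show False using T by linarith
qed

lemma horizon_power_bound: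
  fixes T K :: nat
  assumes "1 \<le> T" "ln (real T) \<le> real K"
  shows "(real T * inverse ((2 * exp 1) ^ T)) ^ K \<le> (1 / real T) ^ T"
proof -
  define L where "L = ln (real T)"
  define c where "c = real T * inverse ((2 * exp 1) ^ T)"
  have c_pos: "0 < c" unfolding c_def using assms(1) by simp
  have ln_c: "ln c = L - real T * (ln 2 + 1)"
    using assms(1) by (simp add: c_def L_def ln_mult ln_inverse ln_realpow algebra_simps)
  have L_nonneg: "0 \<le> L" unfolding L_def using assms(1) by simp
  have "real T \<le> 2 ^ T"
    using less_exp[of T] by (metis of_nat_le_iff of_nat_numeral of_nat_power less_imp_le)
  then have L_le: "L \<le> real T * ln 2"
    using assms(1) ln_le_cancel_iff[of "real T" "2 ^ T"] by (simp add: L_def ln_realpow)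
  have "ln (c ^ K) = real K * ln c" by (simp add: ln_realpow)
  also have "\<dots> \<le> L * ln c"
    using assms ln_c L_le L_nonneg ln_ge_zero[of 2]
    by (intro mult_right_mono_neg) (auto simp: L_def algebra_simps)
  also have "\<dots> \<le> L * (- real T)"
    unfolding ln_c using L_le L_nonneg by (intro mult_left_mono) (auto simp: algebra_simps)
  also have "\<dots> = ln ((1 / real T) ^ T)"
    using assms(1) by (simp add: ln_realpow ln_div L_def)
  finally show ?thesis
    unfolding c_def[symmetric] using c_pos assms(1) by (subst (asm) ln_le_cancel_iff) auto
qed

lemma ln_small_wrt_horizon:
  assumes "25 * ln (real T) < real T"
  shows "13 * ln (real T) + 1 \<le> real T"
proof (cases "T \<le> 1")
  case True
  then show ?thesis using assms by (cases T) auto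
next
  case False
  then have "ln 2 \<le> ln (real T)" by simp
  then show ?thesis using ln2_ge_two_thirds assms by linarith
qed

theorem mainTheorem19:
  fixes T :: nat and pick :: "history \<Rightarrow> nat"
  assumes "real T > 25 * ln (real T)"
    and "is_ucb_rule {1, 2} T pick"
  shows "nash_regret {1, 2} pick
           (\<lambda>i. if i = 1 then inverse ((2 * exp 1) ^ T) else 1) T \<ge> 1 - 1 / real T"
proof -
  define e :: real where "e = inverse ((2 * exp 1) ^ T)"
  define P where "P = (\<Prod>t<T. exp_mean_pulled pick (hard_instance e) t)"
  have T: "1 \<le> T" using assms(1) by (cases T) auto
  have "1 \<le> (2 * exp (1::real)) ^ T"
    using exp_ge_add_one_self[of 1] by (intro one_le_power) simp
  then have e: "0 \<le> e" "e \<le> 1" by (auto simp: e_def field_simps)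
  have "P \<le> (real T * e) ^ pulls (typical_history pick T) 1"
    unfolding P_def using e by (rule prod_exp_mean_pulled_le) simp
  also have "\<dots> \<le> (1 / real T) ^ T"
    unfolding e_def using T ln_le_typical_pulls_arm1[OF assms(2) ln_small_wrt_horizon[OF assms(1)]]
    by (rule horizon_power_bound)
  finally have "root T P \<le> 1 / real T"
    using T real_root_le_mono[of T P "(1 / real T) ^ T"] real_root_pos2[of T "1 / real T"] by simp
  moreover have "Max (hard_instance e ` {1, 2}) = 1"
    using e by (simp add: hard_instance_def max_def)
  moreover have "(\<lambda>i. if i = 1 then inverse ((2 * exp 1) ^ T) else 1) = hard_instance e"
    by (simp add: fun_eq_iff hard_instance_def e_def)
  ultimately show ?thesis
    by (simp add: nash_regret_def P_def)
qed

end
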